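(* Consider the wireless network described in the context, with nodes sending independent codewords under decode-and-forward (DF). Suppose the nearest neighbor algorithm (NNA) terminates normally, producing a route $\mathcal{M}^{\mathrm{NNA}}$ from the source (node $1$) to the destination (node $D$). Then $\mathcal{M}^{\mathrm{NNA}}$ is optimal for DF: $$R_{\mathrm{DF}}(\mathcal{M}^{\mathrm{NNA}}) = R_{\mathrm{DF}}^{\max} = \max_{\mathcal{M}} R_{\mathrm{DF}}(\mathcal{M}),$$ where the maximum is over all routes $\mathcal{M}$ from node $1$ to node $D$.
   Context: Network: a finite set of nodes $\mathcal{S}=\{1,2,\dots,D\}$, $D\ge 2$. Node $1$ is the source and node $D$ is the destination. Received powers: for distinct nodes $i,t$, the power received at $t$ from $i$ is a positive real number $P_{it}$. In the paper $P_{it}=\kappa d_{it}^{-\eta}P_i$, where $P_i>0$ is the transmit power, $d_{it}$ the distance, $\eta\ge 2$ and $\kappa>0$. All receivers have the same noise power $N>0$. Routes: a route is an ordered tuple of distinct nodes $\mathcal{M}=(m_1,\dots,m_L)$ with $m_1=1$ and $L\ge1$. It is a route from the source to the destination if moreover $m_L=D$. For a route $\mathcal{M}$ and a node $a\notin\mathcal{M}$, $\mathcal{M}\cup\{a\}$ denotes the route $(m_1,\dots,m_L,a)$; appending an ordered tuple of nodes is defined the same way. DF with independent codewords: the reception rate of node $m_t$ ($2\le t\le L$) in route $\mathcal{M}$ is $$R_{m_t}(\mathcal{M})=\tfrac12\log\Big(1+N^{-1}\sum_{i=1}^{t-1}P_{m_i m_t}\Big).$$ The DF rate supported by $\mathcal{M}$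 (for $L\ge2$) is $R_{\mathrm{DF}}(\mathcal{M})=\min_{2\le t\le L}R_{m_t}(\mathcal{M})$. Also $R_{\mathrm{DF}}^{\max}=\max R_{\mathrm{DF}}(\mathcal{M})$ over all routes from $1$ to $D$. A route from $1$ to $D$ is optimal for DF if it attains $R_{\mathrm{DF}}^{\max}$. Nearest neighbor: node $i\notin\mathcal{M}$ is a nearest neighbor with respect to route $\mathcal{M}$ iff $P_{mi}\ge P_{mj}$ for all $m\in\mathcal{M}$ and all $j\in\mathcal{S}\setminus(\mathcal{M}\cup\{i\})$. NNA: 1. Start with $\mathcal{M}=(1)$. 2. If there is a unique nearest neighbor $i^*$ with respect to the current $\mathcal{M}$, set $\mathcal{M}\leftarrow\mathcal{M}\cup\{i^*\}$; otherwise the algorithm terminates prematurely. 3. Repeat step 2 until node $D$ has been appended, in which case the algorithm terminates normally and outputs $\mathcal{M}$. *)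

theory Defs
  imports Complex_Main
begin

text \<open>Nodes are 1..D; P i t is the power received at t from i; N the noise power.
Routes are lists of distinct nodes starting with node 1.\<close>

definition nodes :: "nat \<Rightarrow> nat set" where
  "nodes D = {1..D}"

definition is_route :: "nat \<Rightarrow> nat list \<Rightarrow> bool" where
  "is_route D M \<longleftrightarrow> M \<noteq> [] \<and> distinct M \<and> set M \<subseteq> nodes D \<and> hd M = 1"

definition is_route_to_dest :: "nat \<Rightarrow> nat list \<Rightarrow> bool" where
  "is_route_to_dest D M \<longleftrightarrow> is_route D M \<and> last M = D"

text \<open>Reception rate of the node at (0-based) position t of route M, i.e. m_{t+1}:
 1/2 log(1 + N^{-1} * sum of powers received from all earlier nodes).\<close>
definition rec_rate :: "(nat \<Rightarrow> nat \<Rightarrow> real) \<Rightarrow> real \<Rightarrow> nat list \<Rightarrow> nat \<Rightarrow> real" where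
  "rec_rate P N M t = (1/2) * log 2 (1 + (\<Sum>i<t. P (M ! i) (M ! t)) / N)"

text \<open>DF rate of a route with at least two nodes: minimum over positions 2..L (1-based).\<close>
definition R_DF :: "(nat \<Rightarrow> nat \<Rightarrow> real) \<Rightarrow> real \<Rightarrow> nat list \<Rightarrow> real" where
  "R_DF P N M = Min ((\<lambda>t. rec_rate P N M t) ` {1..<length M})"

definition R_DF_max :: "nat \<Rightarrow> (nat \<Rightarrow> nat \<Rightarrow> real) \<Rightarrow> real \<Rightarrow> real" where
  "R_DF_max D P N = Max (R_DF P N ` {M. is_route_to_dest D M})"

definition nearest_neighbor :: "nat \<Rightarrow> (nat \<Rightarrow> nat \<Rightarrow> real) \<Rightarrow> nat list \<Rightarrow> nat \<Rightarrow> bool" where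
  "nearest_neighbor D P M i \<longleftrightarrow> i \<in> nodes D \<and> i \<notin> set M \<and>
     (\<forall>m\<in>set M. \<forall>j\<in>nodes D - (set M \<union> {i}). P m i \<ge> P m j)"

inductive nna_reach :: "nat \<Rightarrow> (nat \<Rightarrow> nat \<Rightarrow> real) \<Rightarrow> nat list \<Rightarrow> bool"
  for D P where
  start: "nna_reach D P [1]"
| step: "\<lbrakk> nna_reach D P M; D \<notin> set M; nearest_neighbor D P M i;
          \<forall>j. nearest_neighbor D P M j \<longrightarrow> j = i \<rbrakk> \<Longrightarrow> nna_reach D P (M @ [i])"

definition nna_output :: "nat \<Rightarrow> (nat \<Rightarrow> nat \<Rightarrow> real) \<Rightarrow> nat list \<Rightarrow> bool" where
  "nna_output D P M \<longleftrightarrow> nna_reach D P M \<and> D \<in> set M"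

end

theory Submission
  imports Defs
begin

(* Let M be the NNA output and let t be a bottleneck position of M, i.e. a position
   whose reception rate equals R_DF(M).  The prefix S = {m_1,...,m_(t-1)} contains the
   source but not the destination, so any other route M' to the destination has a
   first position s at which it leaves S; every node before s lies in S.  The power
   received by M'!s from its predecessors is at most the power it receives from all
   of S, which by the nearest neighbour property of M!t is at most the power M!t
   receives from S.  Hence R_DF(M') <= rate of M' at s <= rate of M at t = R_DF(M). *)

definition received_power :: "(nat \<Rightarrow> nat \<Rightarrow> real) \<Rightarrow> nat set \<Rightarrow> nat \<Rightarrow> real" where
  "received_power P S x = (\<Sum>y\<in>S. P y x)"

lemma sum_prefix_positions:
  assumes "distinct xs" "s \<le> length xs"
  shows "(\<Sum>i<s. f (xs ! i)) = sum f (set (take s xs))"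
proof -
  have inj: "inj_on ((!) xs) {..<s}"
    using assms by (auto simp: inj_on_def nth_eq_iff_index_eq)
  have "set (take s xs) = (!) xs ` {..<s}"
    using nth_image[OF assms(2)] by (simp add: lessThan_atLeast0)
  then show ?thesis by (simp add: sum.reindex[OF inj])
qed

lemma rec_rate_received_power:
  assumes "distinct M" "t < length M"
  shows "rec_rate P N M t = 1/2 * log 2 (1 + received_power P (set (take t M)) (M ! t) / N)"
  using sum_prefix_positions[OF assms(1), of t "\<lambda>y. P y (M ! t)"] assms(2)
  by (simp add: rec_rate_def received_power_def)

lemma rate_mono:
  fixes a b N :: real
  assumes "N > 0" "0 \<le> a" "a \<le> b"
  shows "1/2 * log 2 (1 + a / N) \<le> 1/2 * log 2 (1 + b / N)"
  using assms by (simp add: divide_right_mono add_pos_nonneg)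

lemma R_DF_le_rec_rate:
  assumes "t \<in> {1..<length M}"
  shows "R_DF P N M \<le> rec_rate P N M t"
  unfolding R_DF_def using assms by (intro Min_le) auto

lemma R_DF_bottleneck:
  assumes "length M \<ge> 2"
  obtains t where "t \<in> {1..<length M}" "R_DF P N M = rec_rate P N M t"
proof -
  have "R_DF P N M \<in> (\<lambda>t. rec_rate P N M t) ` {1..<length M}"
    unfolding R_DF_def using assms by (intro Min_in) auto
  then show ?thesis using that by blast
qed

lemma finite_routes_to_dest: "finite {M. is_route_to_dest D M}"
proof (rule finite_subset)
  show "{M. is_route_to_dest D M} \<subseteq> {xs. set xs \<subseteq> nodes D \<and> length xs \<le> card (nodes D)}"
  proof
    fix xs assume "xs \<in> {M. is_route_to_dest D M}"
    then have "distinct xs" and sub: "set xs \<subseteq> nodes D"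
      by (auto simp: is_route_to_dest_def is_route_def)
    then have "length xs \<le> card (nodes D)"
      by (metis card_mono distinct_card finite_atLeastAtMost nodes_def)
    then show "xs \<in> {xs. set xs \<subseteq> nodes D \<and> length xs \<le> card (nodes D)}"
      using sub by simp
  qed
  show "finite {xs. set xs \<subseteq> nodes D \<and> length xs \<le> card (nodes D)}"
    by (rule finite_lists_length_le) (simp add: nodes_def)
qed

lemma R_DF_max_eqI:
  assumes "is_route_to_dest D M"
    and "\<And>M'. is_route_to_dest D M' \<Longrightarrow> R_DF P N M' \<le> R_DF P N M"
  shows "R_DF_max D P N = R_DF P N M"
  unfolding R_DF_max_def
  using assms finite_routes_to_dest by (intro Max_eqI) auto

lemma nna_reach_route:
  assumes "nna_reach D P M" "D \<ge> 1"
  shows "is_route D M"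
  using assms(1)
proof (induction rule: nna_reach.induct)
  case start
  then show ?case using assms(2) by (simp add: is_route_def nodes_def)
next
  case (step M i)
  from step.hyps(3) have "i \<in> nodes D" "i \<notin> set M"
    by (simp_all add: nearest_neighbor_def)
  then show ?case using step.IH by (simp add: is_route_def)
qed

lemma nna_reach_dest_not_before_last:
  assumes "nna_reach D P M"
  shows "D \<notin> set (butlast M)"
  using assms
proof (induction rule: nna_reach.induct)
  case start
  show ?case by simp
next
  case (step M i)
  show ?case using step.hyps(2) by simp
qed

lemma nna_reach_nearest:
  assumes "nna_reach D P M" "1 \<le> t" "t < length M"
  shows "nearest_neighbor D P (take t M) (M ! t)"
  using assms
proof (induction arbitrary: t rule: nna_reach.induct)
  case start
  then show ?case by simp
next
  case (step M i)
  show ?case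
  proof (cases "t < length M")
    case True
    then show ?thesis using step.IH step.prems by (simp add: nth_append)
  next
    case False
    then have "t = length M" using step.prems by simp
    then show ?thesis using step.hyps(3) by simp
  qed
qed

lemma nna_output_route_to_dest:
  assumes "nna_output D P M" "D \<ge> 1"
  shows "is_route_to_dest D M"
proof -
  have reach: "nna_reach D P M" and "D \<in> set M"
    using assms(1) by (auto simp: nna_output_def)
  moreover have "M = butlast M @ [last M]"
    using nna_reach_route[OF reach assms(2)] by (simp add: is_route_def)
  ultimately have "D \<in> set (butlast M) \<union> {last M}"
    by (metis set_append empty_set list.simps(15) Un_empty_right)
  then have "last M = D"
    using nna_reach_dest_not_before_last[OF reach] by simp
  then show ?thesis using nna_reach_route[OF reach assms(2)] by (simp add: is_route_to_dest_def)
qed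

lemma route_to_dest_length:
  assumes "is_route_to_dest D M" "D \<noteq> 1"
  shows "length M \<ge> 2"
proof (rule ccontr)
  assume "\<not> length M \<ge> 2"
  moreover have "length M > 0" using assms(1) by (simp add: is_route_to_dest_def is_route_def)
  ultimately have "length M = 1" by linarith
  then have "last M = hd M" by (cases M) auto
  then show False using assms by (simp add: is_route_to_dest_def is_route_def)
qed

lemma first_exit:
  assumes "xs \<noteq> []" "hd xs \<in> S" "last xs \<notin> S"
  obtains s where "0 < s" "s < length xs" "xs ! s \<notin> S" "set (take s xs) \<subseteq> S"
proof -
  have ex: "\<exists>s. s < length xs \<and> xs ! s \<notin> S"
    using assms by (intro exI[of _ "length xs - 1"]) (simp add: last_conv_nth)
  define s where "s = (LEAST s. s < length xs \<and> xs ! s \<notin> S)"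
  have out: "s < length xs" "xs ! s \<notin> S"
    using LeastI_ex[OF ex] unfolding s_def by auto
  have before: "xs ! i \<in> S" if "i < s" for i
    using not_less_Least[of i "\<lambda>s. s < length xs \<and> xs ! s \<notin> S"] that out
    unfolding s_def by auto
  have "s \<noteq> 0" using out assms(1,2) by (metis hd_conv_nth)
  moreover have "set (take s xs) \<subseteq> S"
    using before by (auto simp: in_set_conv_nth)
  ultimately show ?thesis using that out by blast
qed

lemma nearest_neighbor_dominates:
  assumes nn: "nearest_neighbor D P M z"
    and nonneg: "\<And>i t. i \<in> nodes D \<Longrightarrow> t \<in> nodes D \<Longrightarrow> i \<noteq> t \<Longrightarrow> 0 \<le> P i t"
    and route: "set M \<subseteq> nodes D"
    and x: "x \<in> nodes D" "x \<notin> set M"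
    and T: "T \<subseteq> set M"
  shows "received_power P T x \<le> received_power P (set M) z"
proof -
  have "received_power P T x \<le> received_power P (set M) x"
    unfolding received_power_def
    using T route x nonneg by (intro sum_mono2) auto
  also have "\<dots> \<le> received_power P (set M) z"
    unfolding received_power_def
  proof (rule sum_mono)
    fix y assume "y \<in> set M"
    then show "P y x \<le> P y z"
      using nn x by (cases "x = z") (auto simp: nearest_neighbor_def)
  qed
  finally show ?thesis .
qed

lemma greedy_route_optimal:
  assumes nonneg: "\<And>i t. i \<in> nodes D \<Longrightarrow> t \<in> nodes D \<Longrightarrow> i \<noteq> t \<Longrightarrow> 0 \<le> P i t"
    and "N > 0" "D \<noteq> 1"
    and M: "is_route_to_dest D M" "D \<notin> set (butlast M)"
    and greedy: "\<And>t. 1 \<le> t \<Longrightarrow> t < length M \<Longrightarrow> nearest_neighbor D P (take t M) (M ! t)"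
    and M': "is_route_to_dest D M'"
  shows "R_DF P N M' \<le> R_DF P N M"
proof -
  have route: "M \<noteq> []" "distinct M" "set M \<subseteq> nodes D" "hd M = 1" "last M = D"
    and route': "M' \<noteq> []" "distinct M'" "set M' \<subseteq> nodes D" "hd M' = 1" "last M' = D"
    using M(1) M' by (auto simp: is_route_to_dest_def is_route_def)
  have "length M \<ge> 2" using M(1) \<open>D \<noteq> 1\<close> by (rule route_to_dest_length)
  then obtain t where t: "t \<in> {1..<length M}" and bottleneck: "R_DF P N M = rec_rate P N M t"
    by (rule R_DF_bottleneck)
  define S where "S = set (take t M)"
  have "hd M \<in> S" using t route(1) by (cases M) (auto simp: S_def take_Cons')
  moreover have "D \<notin> S"
  proof -
    have "S = set (take t (butlast M))" using t by (simp add: S_def take_butlast)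
    then show ?thesis using M(2) set_take_subset by fast
  qed
  ultimately obtain s where s: "0 < s" "s < length M'" "M' ! s \<notin> S" and prefix: "set (take s M') \<subseteq> S"
    using first_exit[of M' S] route' route(4) by auto
  have "S \<subseteq> nodes D" using route(3) set_take_subset unfolding S_def by fast
  moreover have "M' ! s \<in> nodes D" using route'(3) s(2) by auto
  ultimately have power_le: "received_power P (set (take s M')) (M' ! s) \<le> received_power P S (M ! t)"
    using nearest_neighbor_dominates[OF greedy[of t] nonneg] t s(3) prefix
    unfolding S_def by simp
  have "set (take s M') \<subseteq> nodes D" using route'(3) set_take_subset by fast
  then have "0 \<le> received_power P (set (take s M')) (M' ! s)"
    unfolding received_power_def using \<open>M' ! s \<in> nodes D\<close> s(3) prefix
    by (intro sum_nonneg nonneg) auto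
  then have "rec_rate P N M' s \<le> rec_rate P N M t"
    using rate_mono[OF \<open>N > 0\<close> _ power_le] route'(2) route(2) s(2) t
    by (simp add: rec_rate_received_power S_def)
  moreover have "R_DF P N M' \<le> rec_rate P N M' s"
    using s by (intro R_DF_le_rec_rate) auto
  ultimately show ?thesis using bottleneck by simp
qed

theorem theorem1:
  fixes D :: nat and P :: "nat \<Rightarrow> nat \<Rightarrow> real" and N :: real and M :: "nat list"
  assumes "D \<ge> 2"
    and "N > 0"
    and "\<And>i t. i \<in> nodes D \<Longrightarrow> t \<in> nodes D \<Longrightarrow> i \<noteq> t \<Longrightarrow> P i t > 0"
    and "nna_output D P M"
  shows "is_route_to_dest D M \<and> R_DF P N M = R_DF_max D P N"
proof -
  have reach: "nna_reach D P M" using assms(4) by (simp add: nna_output_def)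
  have route: "is_route_to_dest D M"
    using nna_output_route_to_dest assms(1,4) by simp
  have nonneg: "0 \<le> P i t" if "i \<in> nodes D" "t \<in> nodes D" "i \<noteq> t" for i t
    using assms(3)[OF that] by simp
  have "R_DF P N M' \<le> R_DF P N M" if "is_route_to_dest D M'" for M'
    using greedy_route_optimal[OF nonneg assms(2) _ route nna_reach_dest_not_before_last[OF reach]
        nna_reach_nearest[OF reach] that] assms(1) by simp
  then show ?thesis using route R_DF_max_eqI[OF route] by simp
qed

end
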